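(* Fix a program in the first-order functional language described in the context. For every expression $\pi{:}e$ of the program and every slicing criterion $\sigma$, $$L(G_\pi^\sigma)=L(G_\pi^{\{\epsilon\}})\,\sigma,$$ where $G_\pi^\sigma$ is the context-free demand grammar for program point $\pi$ under slicing criterion $\sigma$, and juxtaposition denotes concatenation of languages.
   Context: Programs. A program consists of first-order function definitions $(\mathtt{define}\ (f\ z_1\ \dots\ z_n)\ e_f)$ and a main expression $e_{\mathrm{main}}$, which is treated as the body of a parameterless function $\mathrm{main}$. Programs are in administrative normal form and all variable names are distinct. The grammar is $e ::= (\mathtt{if}\ x\ e_1\ e_2) \mid (\mathtt{let}\ x \leftarrow s\ \mathtt{in}\ e) \mid (\mathtt{return}\ x)$, $s ::= k \mid \mathtt{nil} \mid (\mathtt{cons}\ x_1\ x_2) \mid (\mathtt{car}\ x) \mid (\mathtt{cdr}\ x) \mid (\mathtt{null?}\ x) \mid (+\ x_1\ x_2) \mid (f\ x_1 \dots x_n)$. Every expression, every application and every variable occurrence carries a distinct label (program point) $\pi$, written $\pi{:}e$. Demands. Let $\Sigma=\{0,1,\bar 0,\bar 1,2\}$. A demand is a set of strings over $\Sigma$. For sets we write $\sigma_1\sigma_2=\{\alpha\beta\mid\alpha\in\sigma_1,\beta\in\sigma_2\}$ and $a\sigma=\{a\alpha\mid\alpha\in\sigma\}$. A slicing criterion is a prefix-closed set of strings over $\{0,1\}$, given by a regular grammar. Demand analysis. Maps from program points to demands are combined by pointwise union. For an application $\pi{:}s$ and a demand $\sigma$, $\mathcal A(s,\sigma)$ is: -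 for a constant $k$ or $\mathtt{nil}$: $\{\pi\mapsto\sigma\}$; - for $(\mathtt{null?}\ \pi_1{:}x)$: $\{\pi_1\mapsto 2\sigma,\ \pi\mapsto\sigma\}$; - for $(+\ \pi_1{:}x\ \pi_2{:}y)$: $\{\pi_1\mapsto 2\sigma,\ \pi_2\mapsto 2\sigma,\ \pi\mapsto\sigma\}$; - for $(\mathtt{car}\ \pi_1{:}x)$: $\{\pi_1\mapsto 2\sigma\cup 0\sigma,\ \pi\mapsto\sigma\}$; - for $(\mathtt{cdr}\ \pi_1{:}x)$: $\{\pi_1\mapsto 2\sigma\cup1\sigma,\ \pi\mapsto\sigma\}$; - for $(\mathtt{cons}\ \pi_1{:}x\ \pi_2{:}y)$: $\{\pi_1\mapsto\bar0\sigma,\ \pi_2\mapsto\bar1\sigma,\ \pi\mapsto\sigma\}$; - for $(f\ \pi_1{:}y_1\dots\pi_n{:}y_n)$: $\{\pi_i\mapsto L_f^i\sigma,\ \pi\mapsto\sigma\}$. For expressions, $\mathcal D$ is: - $\mathcal D(\pi{:}(\mathtt{return}\ \pi_1{:}x),\sigma)=\{\pi_1\mapsto\sigma,\pi\mapsto\sigma\}$; - $\mathcal D(\pi{:}(\mathtt{if}\ \pi_1{:}x\ e_1\ e_2),\sigma)=\mathcal D(e_1,\sigma)\cup\mathcal D(e_2,\sigma)\cup\{\pi_1\mapsto 2\sigma,\pi\mapsto\sigma\}$; - $\mathcal D(\pi{:}(\mathtt{let}\ x\leftarrow s\ \mathtt{in}\ e),\sigma)=\mathcal A(s,\bigcup_{\pi'}DE(\pi'))\cup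 DE\cup\{\pi\mapsto\sigma\}$, where $DE=\mathcal D(e,\sigma)$ and $\pi'$ ranges over the occurrences of $x$ in $e$. Function summaries. $L_f^i\subseteq\Sigma^*$ is required to satisfy, for every $\sigma$, that $L_f^i\sigma$ equals the union of $\mathcal D(e_f,\sigma)(\pi')$ over the occurrences $\pi'$ of $z_i$ in $e_f$; these requirements are computed with a symbolic placeholder for $\sigma$. The concrete demand on a function is $\sigma_{\mathrm{main}}=$ the slicing criterion, and for other $f$, $\sigma_f$ is the union of the demands on all call-site applications of $f$. The demand $D_\pi$ at a program point $\pi$ in the body of $f$ is $\mathcal D(e_f,\sigma_f)(\pi)$. All these equations, with one nonterminal for each $L_f^i$, each $\sigma_f$ and each $D_\pi$, and with $\sigma_{\mathrm{main}}$ producing the strings of the slicing criterion, form a context-free grammar over $\Sigma$ whose least solution defines these sets. $G_\pi^\sigma$ is this grammar with start symbol $D_\pi$ when the slicing criterion is $\sigma$, and $L(G_\pi^\sigma)$ is its language. The same construction is used for any set $\sigma$ of strings over $\{0,1\}$ in place of the criterion. *)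

theory Defs
  imports Main
begin

type_synonym lab = nat
type_synonym var = nat
type_synonym fname = nat  \<comment> \<open>function names (main is separate)\<close>
type_synonym occ = "lab \<times> var"  \<comment> \<open>a labelled variable occurrence \<pi>:x\<close>

text \<open>Simple expressions s (applications); the label of the application is stored in the let.\<close>
datatype app =
    AConst int
  | ANil
  | ACons occ occ
  | ACar occ
  | ACdr occ
  | ANull occ
  | APlus occ occ
  | ACall fname "occ list"

text \<open>Expressions; the first lab is the label of the expression. In ELet, the
  second lab is the label of the application s.\<close>
datatype expr =
    EIf lab occ expr expr
  | ELet lab var lab app expr
  | EReturn lab occ

text \<open>A program: list of definitions (f, [z1..zn], e_f) and a main expression.\<close>
type_synonym defs = "(fname \<times> var list \<times> expr) list"

datatype sym = Zero | One | ZeroBar | OneBar | Two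

type_synonym demand = "sym list set"

definition conc :: "'a list set \<Rightarrow> 'a list set \<Rightarrow> 'a list set" where
  "conc A B = {a @ b | a b. a \<in> A \<and> b \<in> B}"

definition pre :: "'a \<Rightarrow> 'a list set \<Rightarrow> 'a list set" where
  "pre a A = (\<lambda>w. a # w) ` A"

definition single :: "lab \<Rightarrow> demand \<Rightarrow> (lab \<Rightarrow> demand)" where
  "single p s = (\<lambda>q. if q = p then s else {})"

type_synonym lenv = "fname \<Rightarrow> nat \<Rightarrow> demand"  \<comment> \<open>values of the L_f^i\<close>

fun Aan :: "lenv \<Rightarrow> lab \<Rightarrow> app \<Rightarrow> demand \<Rightarrow> (lab \<Rightarrow> demand)" where
  "Aan L p (AConst k) s = single p s"
| "Aan L p ANil s = single p s"
| "Aan L p (ANull (p1, x)) s = sup (single p1 (pre Two s)) (single p s)"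
| "Aan L p (APlus (p1, x) (p2, y)) s =
     sup (sup (single p1 (pre Two s)) (single p2 (pre Two s))) (single p s)"
| "Aan L p (ACar (p1, x)) s = sup (single p1 (pre Two s \<union> pre Zero s)) (single p s)"
| "Aan L p (ACdr (p1, x)) s = sup (single p1 (pre Two s \<union> pre One s)) (single p s)"
| "Aan L p (ACons (p1, x) (p2, y)) s =
     sup (sup (single p1 (pre ZeroBar s)) (single p2 (pre OneBar s))) (single p s)"
| "Aan L p (ACall f args) s =
     sup (\<lambda>q. \<Union>i<length args. if fst (args ! i) = q then conc (L f i) s else {}) (single p s)"

fun app_occs :: "app \<Rightarrow> occ list" where
  "app_occs (AConst k) = []"
| "app_occs ANil = []"
| "app_occs (ACons a b) = [a, b]"
| "app_occs (ACar a) = [a]"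
| "app_occs (ACdr a) = [a]"
| "app_occs (ANull a) = [a]"
| "app_occs (APlus a b) = [a, b]"
| "app_occs (ACall f args) = args"

fun occs :: "var \<Rightarrow> expr \<Rightarrow> lab set" where
  "occs x (EIf p (p1, y) e1 e2) = {q. (q, x) = (p1, y)} \<union> occs x e1 \<union> occs x e2"
| "occs x (ELet p y ps s e) = {q. (q, x) \<in> set (app_occs s)} \<union> occs x e"
| "occs x (EReturn p (p1, y)) = {q. (q, x) = (p1, y)}"

fun Dan :: "lenv \<Rightarrow> expr \<Rightarrow> demand \<Rightarrow> (lab \<Rightarrow> demand)" where
  "Dan L (EReturn p (p1, x)) s = sup (single p1 s) (single p s)"
| "Dan L (EIf p (p1, x) e1 e2) s =
     sup (sup (sup (Dan L e1 s) (Dan L e2 s)) (single p1 (pre Two s))) (single p s)"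
| "Dan L (ELet p x ps a e) s =
     (let DE = Dan L e s in
        sup (sup (Aan L ps a (\<Union>q\<in>occs x e. DE q)) DE) (single p s))"

text \<open>Equations for the summaries L_f^i: the requirement
  L_f^i sigma = U D(e_f, sigma)(pi') is computed with a symbolic placeholder for sigma,
  i.e. L_f^i is the language of strings standing before the placeholder; this is the
  instance sigma = {epsilon}.\<close>
definition Lstep :: "defs \<Rightarrow> lenv \<Rightarrow> lenv" where
  "Lstep ds L = (\<lambda>f i. case map_of ds f of
       None \<Rightarrow> {}
     | Some (zs, ef) \<Rightarrow> if i < length zs then (\<Union>q\<in>occs (zs ! i) ef. Dan L ef {[]} q) else {})"

definition Lsol :: "defs \<Rightarrow> lenv" where
  "Lsol ds = lfp (Lstep ds)"

text \<open>Functions of the program: None is main, Some f a defined function.\<close>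
definition allfuns :: "defs \<Rightarrow> fname option set" where
  "allfuns ds = insert None (Some ` fst ` set ds)"

definition body :: "defs \<Rightarrow> expr \<Rightarrow> fname option \<Rightarrow> expr" where
  "body ds m g = (case g of None \<Rightarrow> m
                   | Some f \<Rightarrow> (case map_of ds f of Some (zs, ef) \<Rightarrow> ef | None \<Rightarrow> m))"

text \<open>Call sites: label of the application and the called function, with its arguments.\<close>
fun calls :: "expr \<Rightarrow> (lab \<times> fname \<times> occ list) set" where
  "calls (EIf p x e1 e2) = calls e1 \<union> calls e2"
| "calls (ELet p x ps a e) =
     (case a of ACall f args \<Rightarrow> {(ps, f, args)} | _ \<Rightarrow> {}) \<union> calls e"
| "calls (EReturn p x) = {}"

definition Sstep :: "defs \<Rightarrow> expr \<Rightarrow> demand \<Rightarrow> lenv \<Rightarrow>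
                     (fname option \<Rightarrow> demand) \<Rightarrow> (fname option \<Rightarrow> demand)" where
  "Sstep ds m crit L S = (\<lambda>g. case g of
       None \<Rightarrow> crit
     | Some f \<Rightarrow> (\<Union>h\<in>allfuns ds. \<Union>(q, f', args)\<in>calls (body ds m h).
                      if f' = f then Dan L (body ds m h) (S h) q else {}))"

definition Ssol :: "defs \<Rightarrow> expr \<Rightarrow> demand \<Rightarrow> fname option \<Rightarrow> demand" where
  "Ssol ds m crit = lfp (Sstep ds m crit (Lsol ds))"

fun app_labs :: "app \<Rightarrow> lab list" where
  "app_labs a = map fst (app_occs a)"

fun labs :: "expr \<Rightarrow> lab list" where
  "labs (EIf p x e1 e2) = p # fst x # labs e1 @ labs e2"
| "labs (ELet p x ps a e) = p # ps # app_labs a @ labs e"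
| "labs (EReturn p x) = [p, fst x]"

fun exprlabs :: "expr \<Rightarrow> lab set" where
  "exprlabs (EIf p x e1 e2) = insert p (exprlabs e1 \<union> exprlabs e2)"
| "exprlabs (ELet p x ps a e) = insert p (exprlabs e)"
| "exprlabs (EReturn p x) = {p}"

text \<open>The demand D_pi (the language L(G_pi^crit)) at program point pi.\<close>
definition demand :: "defs \<Rightarrow> expr \<Rightarrow> demand \<Rightarrow> lab \<Rightarrow> demand" where
  "demand ds m crit p =
     (\<Union>h\<in>allfuns ds. if p \<in> set (labs (body ds m h))
                       then Dan (Lsol ds) (body ds m h) (Ssol ds m crit h) p else {})"

fun binders :: "expr \<Rightarrow> var list" where
  "binders (EIf p x e1 e2) = binders e1 @ binders e2"
| "binders (ELet p x ps a e) = x # binders e"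
| "binders (EReturn p x) = []"

definition wf_prog :: "defs \<Rightarrow> expr \<Rightarrow> bool" where
  "wf_prog ds m \<longleftrightarrow>
     distinct (map fst ds)
   \<and> distinct (labs m @ concat (map (\<lambda>(f, zs, ef). labs ef) ds))
   \<and> distinct (binders m @ concat (map (\<lambda>(f, zs, ef). zs @ binders ef) ds))
   \<and> (\<forall>h\<in>allfuns ds. \<forall>(q, f, args)\<in>calls (body ds m h).
        \<exists>zs ef. map_of ds f = Some (zs, ef) \<and> length zs = length args)"

fun nfa_run :: "(nat \<times> sym \<times> nat) set \<Rightarrow> nat \<Rightarrow> sym list \<Rightarrow> nat \<Rightarrow> bool" where
  "nfa_run \<delta> q [] q' = (q = q')"
| "nfa_run \<delta> q (a # w) q' = (\<exists>r. (q, a, r) \<in> \<delta> \<and> nfa_run \<delta> r w q')"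

text \<open>Regular languages (equivalently: generated by a regular grammar), via finite automata.\<close>
definition regular :: "sym list set \<Rightarrow> bool" where
  "regular A \<longleftrightarrow> (\<exists>(Q :: nat set) q0 F \<delta>. finite Q \<and> q0 \<in> Q \<and> F \<subseteq> Q \<and>
      \<delta> \<subseteq> Q \<times> UNIV \<times> Q \<and> A = {w. \<exists>qf\<in>F. nfa_run \<delta> q0 w qf})"

definition prefix_closed :: "'a list set \<Rightarrow> bool" where
  "prefix_closed A \<longleftrightarrow> (\<forall>u v. u @ v \<in> A \<longrightarrow> u \<in> A)"

definition slicing_criterion :: "demand \<Rightarrow> bool" where
  "slicing_criterion A \<longleftrightarrow> A \<subseteq> lists {Zero, One} \<and> prefix_closed A \<and> regular A"

end

theory Submission
  imports Defs
begin

text \<open>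
  Every equation of the demand grammar is linear on the right in the demand it receives:
  the constructions \<open>A\<close> and \<open>D\<close> only prepend symbols, take unions and prepend the summaries
  \<open>L\<^sub>f\<^sup>i\<close>, so they commute with right concatenation by \<open>\<sigma>\<close>. Hence the map
  \<open>S \<mapsto> (\<lambda>g. S g \<cdot> \<sigma>)\<close> intertwines the equations for the function demands under the
  criteria \<open>{\<epsilon>}\<close> and \<open>\<sigma>\<close>; being union-preserving, it carries the least solution of the first
  system to the least solution of the second, and the demand at each program point follows.
\<close>

lemma conc_Un_left: "conc (A \<union> B) C = conc A C \<union> conc B C"
  unfolding conc_def by blast

lemma conc_UN_left: "conc (\<Union>i\<in>I. A i) B = (\<Union>i\<in>I. conc (A i) B)"
  unfolding conc_def by blast

lemma conc_empty_left [simp]: "conc {} B = {}"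
  unfolding conc_def by blast

lemma conc_Nil_left [simp]: "conc {[]} B = B"
  unfolding conc_def by auto

lemma conc_assoc: "conc (conc A B) C = conc A (conc B C)"
  unfolding conc_def by (auto, metis append.assoc, metis append.assoc)

lemma conc_mono_right: "B \<subseteq> B' \<Longrightarrow> conc A B \<subseteq> conc A B'"
  unfolding conc_def by blast

lemma pre_conc: "pre a (conc A B) = conc (pre a A) B"
  unfolding pre_def conc_def by (auto 0 4 simp: image_iff intro: append_Cons[symmetric])

lemma lfp_fusion:
  fixes \<alpha> :: "'a::complete_lattice \<Rightarrow> 'b::complete_lattice"
  assumes mono_f: "mono f" and mono_g: "mono g"
    and Sup_preserving: "\<And>M. \<alpha> (Sup M) = Sup (\<alpha> ` M)"
    and commute: "\<And>x. \<alpha> (g x) = f (\<alpha> x)"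
  shows "\<alpha> (lfp g) = lfp f"
proof (rule antisym)
  show "\<alpha> (lfp g) \<le> lfp f"
  proof (induction rule: lfp_ordinal_induct[OF mono_g])
    case (1 S)
    have "\<alpha> (g S) = f (\<alpha> S)" by (rule commute)
    also have "\<dots> \<le> f (lfp f)" using 1(1) by (rule monoD[OF mono_f])
    also have "\<dots> = lfp f" by (rule lfp_fixpoint[OF mono_f])
    finally show ?case .
  next
    case (2 M)
    then show ?case by (simp add: Sup_preserving Sup_le_iff)
  qed
  show "lfp f \<le> \<alpha> (lfp g)"
    by (rule lfp_lowerbound) (simp add: commute[symmetric] lfp_fixpoint[OF mono_g])
qed

lemma Aan_conc: "Aan L p a (conc A B) q = conc (Aan L p a A q) B"
proof (cases a)
  case (ACall f args)
  then show ?thesis by (simp add: single_def conc_Un_left conc_UN_left conc_assoc)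
next
  case (ACons x y)
  then show ?thesis by (cases x; cases y) (simp add: single_def conc_Un_left pre_conc)
next
  case (APlus x y)
  then show ?thesis by (cases x; cases y) (simp add: single_def conc_Un_left pre_conc)
next
  case (ACar x)
  then show ?thesis by (cases x) (simp add: single_def conc_Un_left pre_conc)
next
  case (ACdr x)
  then show ?thesis by (cases x) (simp add: single_def conc_Un_left pre_conc)
next
  case (ANull x)
  then show ?thesis by (cases x) (simp add: single_def conc_Un_left pre_conc)
qed (simp_all add: single_def)

lemma Dan_conc: "Dan L e (conc A B) q = conc (Dan L e A q) B"
proof (induction e arbitrary: q)
  case (ELet p x ps a e)
  then show ?case
    by (simp add: Let_def single_def conc_Un_left Aan_conc flip: conc_UN_left)
next
  case (EIf p x e1 e2)
  then show ?case by (cases x) (simp add: single_def conc_Un_left pre_conc)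
next
  case (EReturn p x)
  then show ?case by (cases x) (simp add: single_def conc_Un_left)
qed

lemma Dan_eq_conc: "Dan L e A q = conc (Dan L e {[]} q) A"
  using Dan_conc[of L e "{[]}" A q] by simp

lemma Dan_mono: "A \<subseteq> A' \<Longrightarrow> Dan L e A q \<subseteq> Dan L e A' q"
  by (subst (1 2) Dan_eq_conc) (rule conc_mono_right)

lemma mono_Sstep: "mono (Sstep ds m crit L)"
proof (intro monoI le_funI)
  fix S S' :: "fname option \<Rightarrow> demand" and g
  assume "S \<le> S'"
  then have Dan_le: "Dan L e (S h) q \<subseteq> Dan L e (S' h) q" for e h q
    by (simp add: le_fun_def Dan_mono)
  show "Sstep ds m crit L S g \<le> Sstep ds m crit L S' g"
    unfolding Sstep_def by (cases g) (auto simp: split_def dest: Dan_le[THEN subsetD])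
qed

lemma Sstep_conc:
  "Sstep ds m crit L (\<lambda>g. conc (S g) crit) g = conc (Sstep ds m {[]} L S g) crit"
  by (cases g)
     (simp_all add: Sstep_def conc_UN_left Dan_conc split_def if_distrib[of "\<lambda>X. conc X crit"])

lemma Ssol_conc: "Ssol ds m crit g = conc (Ssol ds m {[]} g) crit"
proof -
  have "(\<lambda>g. conc (lfp (Sstep ds m {[]} (Lsol ds)) g) crit) = lfp (Sstep ds m crit (Lsol ds))"
    by (rule lfp_fusion[OF mono_Sstep mono_Sstep])
       (simp_all add: fun_eq_iff Sstep_conc conc_UN_left)
  then show ?thesis
    unfolding Ssol_def by (simp add: fun_eq_iff)
qed

lemma demand_conc: "demand ds m crit p = conc (demand ds m {[]} p) crit"
  unfolding demand_def
  by (simp add: Ssol_conc[of ds m crit] Dan_conc conc_UN_left if_distrib[of "\<lambda>X. conc X crit"])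

text \<open>The identity holds for every program, program point and set of strings.\<close>

theorem mainTheorem2:
  assumes "wf_prog ds m"
    and "h \<in> allfuns ds"
    and "p \<in> exprlabs (body ds m h)"
    and "slicing_criterion crit"
  shows "demand ds m crit p = conc (demand ds m {[]} p) crit"
  by (rule demand_conc)

end
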